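(* Let $ABC$ be a triangle with incenter $I$ and Bevan point $B_e$. Let $A_0, B_0, C_0$ be the points where the $A$-, $B$-, $C$-excircles touch $BC, CA, AB$ respectively, and let $O_0$ be the circumcenter of $A_0B_0C_0$. Let $A', B', C'$ be the feet of the perpendiculars from $B_e$ to $AI, BI, CI$, and let $H'$ be the orthocenter of $A'B'C'$. Then $B_e$, $H'$, $O_0$ are collinear.
   Context: The Bevan point $B_e$ of $ABC$ is the circumcenter of the excentral triangle (the triangle formed by the three excenters of $ABC$). *)

theory Defs
  imports "HOL-Analysis.Analysis"
begin

type_synonym point = "real^2"

definition circumcenter :: "point \<Rightarrow> point \<Rightarrow> point \<Rightarrow> point" where
  "circumcenter P Q R = (THE X. dist X P = dist X Q \<and> dist X Q = dist X R)"

definition orthocenter :: "point \<Rightarrow> point \<Rightarrow> point \<Rightarrow> point" where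
  "orthocenter P Q R = (THE H. (H - P) \<bullet> (Q - R) = 0 \<and> (H - Q) \<bullet> (P - R) = 0
                               \<and> (H - R) \<bullet> (P - Q) = 0)"

definition foot :: "point \<Rightarrow> point \<Rightarrow> point \<Rightarrow> point" where
  "foot P X Y = X + (((P - X) \<bullet> (Y - X)) / (norm (Y - X))^2) *\<^sub>R (Y - X)"

text \<open>Incenter and excenters via the standard barycentric coordinates
  (a : b : c) and (-a : b : c) etc., with a = |BC|, b = |CA|, c = |AB|.\<close>
definition incenter :: "point \<Rightarrow> point \<Rightarrow> point \<Rightarrow> point" where
  "incenter A B C = (let a = dist B C; b = dist C A; c = dist A B in
     (1 / (a + b + c)) *\<^sub>R (a *\<^sub>R A + b *\<^sub>R B + c *\<^sub>R C))"

definition excenter :: "point \<Rightarrow> point \<Rightarrow> point \<Rightarrow> point" where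
  "excenter A B C = (let a = dist B C; b = dist C A; c = dist A B in
     (1 / (- a + b + c)) *\<^sub>R ((- a) *\<^sub>R A + b *\<^sub>R B + c *\<^sub>R C))"

definition bevan_point :: "point \<Rightarrow> point \<Rightarrow> point \<Rightarrow> point" where
  "bevan_point A B C =
     circumcenter (excenter A B C) (excenter B C A) (excenter C A B)"

end

theory Submission
  imports Defs
begin

(* Barycentric coordinates with respect to ABC turn the statement into polynomial identities in the
   side lengths a = |BC|, b = |CA|, c = |AB|, since the inner product of displacement vectors
   xA + yB + zC (x + y + z = 0) is a quadratic form in a, b, c.  With
   f(a,b,c) = a^3 + a^2(b+c) - a(b+c)^2 - (b+c)(b-c)^2 and s the semiperimeter,
     Be = (a f(a,b,c) : b f(b,c,a) : c f(c,a,b)),   A0 = (0 : s-b : s-c),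
     A' = ((b+c)(b+c-a) - a^2 : ab : ac),
   and cyclically.  The extouch triangle is the pedal triangle of Be, so O0 is the midpoint of Be
   and its isogonal conjugate; the orthocentre H' of A'B'C' is the Nagel point (s-a : s-b : s-c).
   Collinearity of Be, H', O0 is then the vanishing of a 3x3 determinant.  A'B'C' degenerates
   exactly when Schur's expression a(a-b)(a-c) + b(b-c)(b-a) + c(c-a)(c-b) vanishes, i.e. for an
   equilateral triangle, and then Be = O0.  Each point is computed at one vertex and transported to
   the others by rotating (A, B, C). *)

section \<open>Plane geometry\<close>

lemma orthogonal_noncollinear_imp_eq_0:
  fixes P Q R w :: point
  assumes "\<not> collinear {P, Q, R}" and "w \<bullet> (Q - P) = 0" and "w \<bullet> (R - P) = 0"
  shows "w = 0"
proof -
  have "P \<noteq> Q" "P \<noteq> R" "Q \<noteq> R"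
    using assms(1) by (auto simp: insert_commute)
  then have "\<not> dependent ((\<lambda>x. - P + x) ` {Q, R})"
    using assms(1) affine_dependent_iff_dependent[of P "{Q, R}"]
    by (simp add: collinear_3_eq_affine_dependent)
  then have indep: "independent {Q - P, R - P}"
    by simp
  have "card {Q - P, R - P} = 2"
    using \<open>Q \<noteq> R\<close> by simp
  then have "UNIV \<subseteq> span {Q - P, R - P}"
    using card_ge_dim_independent[OF subset_UNIV indep] by simp
  then have "orthogonal w w"
    using orthogonal_to_span[of w "{Q - P, R - P}" w] assms(2,3)
    by (auto simp: orthogonal_def)
  then show ?thesis
    by (simp add: orthogonal_def)
qed

lemma dist_eq_iff_inner_midpoint:
  fixes X P Q :: "'a::real_inner"
  shows "dist X P = dist X Q \<longleftrightarrow> (X - midpoint P Q) \<bullet> (Q - P) = 0"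
proof -
  have "(dist X P)\<^sup>2 - (dist X Q)\<^sup>2 = 2 * ((X - midpoint P Q) \<bullet> (Q - P))"
    by (simp add: dist_norm power2_norm_eq_inner midpoint_def inner_diff_left inner_diff_right
        inner_add_left inner_commute algebra_simps)
  moreover have "dist X P = dist X Q \<longleftrightarrow> (dist X P)\<^sup>2 - (dist X Q)\<^sup>2 = 0"
    by (simp add: power2_eq_iff_nonneg)
  ultimately show ?thesis
    by simp
qed

lemma circumcenter_eqI:
  assumes "\<not> collinear {P, Q, R}" and "dist X P = dist X Q" and "dist X Q = dist X R"
  shows "circumcenter P Q R = X"
  unfolding circumcenter_def
proof (rule the_equality)
  fix Y
  assume Y: "dist Y P = dist Y Q \<and> dist Y Q = dist Y R"
  have "(Y - X) \<bullet> (Q - P) = 0" "(Y - X) \<bullet> (R - P) = 0"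
    using Y assms(2,3) unfolding dist_eq_iff_inner_midpoint
    by (simp_all add: inner_diff_left inner_diff_right midpoint_def algebra_simps)
  then show "Y = X"
    using orthogonal_noncollinear_imp_eq_0[OF assms(1)] by (metis eq_iff_diff_eq_0)
qed (use assms in simp)

lemma orthocenter_eqI:
  assumes "\<not> collinear {P, Q, R}"
    and "(X - P) \<bullet> (Q - R) = 0" "(X - Q) \<bullet> (P - R) = 0" "(X - R) \<bullet> (P - Q) = 0"
  shows "orthocenter P Q R = X"
  unfolding orthocenter_def
proof (rule the_equality)
  fix Y
  assume "(Y - P) \<bullet> (Q - R) = 0 \<and> (Y - Q) \<bullet> (P - R) = 0 \<and> (Y - R) \<bullet> (P - Q) = 0"
  then have "(Y - X) \<bullet> (Q - R) = 0" "(Y - X) \<bullet> (P - R) = 0"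
    using assms(2,3) by (simp_all add: inner_diff_left)
  moreover have "\<not> collinear {R, Q, P}"
    using assms(1) by (simp add: insert_commute)
  ultimately show "Y = X"
    using orthogonal_noncollinear_imp_eq_0 by (metis eq_iff_diff_eq_0)
qed (use assms in simp)

lemma foot_eqI:
  assumes "X \<noteq> Y" and "collinear {X, Y, F}" and "(P - F) \<bullet> (Y - X) = 0"
  shows "foot P X Y = F"
proof -
  obtain t where F: "F = X + t *\<^sub>R (Y - X)"
  proof -
    have "collinear {X, F, Y}"
      using assms(2) by (simp add: insert_commute)
    then obtain u where "F = u *\<^sub>R X + (1 - u) *\<^sub>R Y"
      using assms(1) collinear_3_expand by blast
    then have "F = X + (1 - u) *\<^sub>R (Y - X)"
      by (simp add: algebra_simps)
    then show ?thesis
      using that by blast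
  qed
  have "(P - X) \<bullet> (Y - X) = t * (norm (Y - X))\<^sup>2"
    using assms(3) by (simp add: F power2_norm_eq_inner inner_diff_left inner_add_left)
  then show ?thesis
    using assms(1) by (simp add: foot_def F)
qed

lemma dist_lt_add_if_not_collinear:
  fixes A B C :: point
  assumes "\<not> collinear {A, B, C}"
  shows "dist B C < dist C A + dist A B"
proof -
  have "\<not> between (B, C) A"
    using assms between_imp_collinear[of B C A] by (metis insert_commute)
  then show ?thesis
    using dist_triangle[of B C A] by (simp add: between dist_commute)
qed

section \<open>Barycentric coordinates\<close>

definition bary :: "point \<Rightarrow> point \<Rightarrow> point \<Rightarrow> real \<Rightarrow> real \<Rightarrow> real \<Rightarrow> point" where
  "bary A B C u v w = (1 / (u + v + w)) *\<^sub>R (u *\<^sub>R A + v *\<^sub>R B + w *\<^sub>R C)"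

definition bary_form ::
    "real \<Rightarrow> real \<Rightarrow> real \<Rightarrow> real \<Rightarrow> real \<Rightarrow> real \<Rightarrow> real \<Rightarrow> real \<Rightarrow> real \<Rightarrow> real" where
  "bary_form a b c x y z x' y' z' =
     a\<^sup>2 * (y * z' + z * y') + b\<^sup>2 * (z * x' + x * z') + c\<^sup>2 * (x * y' + y * x')"

lemma bary_rotate: "bary A B C u v w = bary B C A v w u"
  by (simp add: bary_def algebra_simps)

lemma bary_vertices: "bary A B C 1 0 0 = A" "bary A B C 0 1 0 = B" "bary A B C 0 0 1 = C"
  by (simp_all add: bary_def)

lemma bary_centroid: "x \<noteq> 0 \<Longrightarrow> bary A B C x x x = (1 / 3) *\<^sub>R (A + B + C)"
  by (simp add: bary_def scaleR_add_right[symmetric])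

lemma midpoint_bary:
  fixes A B C :: point and u v w u' v' w' :: real
  defines "s \<equiv> u + v + w" and "s' \<equiv> u' + v' + w'"
  assumes "s \<noteq> 0" and "s' \<noteq> 0"
  shows "midpoint (bary A B C u v w) (bary A B C u' v' w') =
    bary A B C (s' * u + s * u') (s' * v + s * v') (s' * w + s * w')"
proof -
  have "(s' * u + s * u') + (s' * v + s * v') + (s' * w + s * w') = 2 * s * s'"
    unfolding s_def s'_def by algebra
  moreover have "(s' * u + s * u') *\<^sub>R A + (s' * v + s * v') *\<^sub>R B + (s' * w + s * w') *\<^sub>R C =
      s' *\<^sub>R (u *\<^sub>R A + v *\<^sub>R B + w *\<^sub>R C) + s *\<^sub>R (u' *\<^sub>R A + v' *\<^sub>R B + w' *\<^sub>R C)"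
    by (simp add: vec_eq_iff algebra_simps)
  ultimately show ?thesis
    using assms(3,4) unfolding bary_def s_def[symmetric] s'_def[symmetric]
    by (simp add: midpoint_def scaleR_add_right)
qed

lemma combination_eq_edges:
  fixes A B C :: point
  assumes "x + y + z = 0"
  shows "x *\<^sub>R A + y *\<^sub>R B + z *\<^sub>R C = y *\<^sub>R (B - A) + z *\<^sub>R (C - A)"
proof -
  have x: "x = - y - z"
    using assms by linarith
  show ?thesis
    by (simp add: x algebra_simps)
qed

lemma inner_combination:
  fixes A B C :: point
  assumes "x + y + z = 0" and "x' + y' + z' = 0"
  shows "(x *\<^sub>R A + y *\<^sub>R B + z *\<^sub>R C) \<bullet> (x' *\<^sub>R A + y' *\<^sub>R B + z' *\<^sub>R C) =
    - bary_form (dist B C) (dist C A) (dist A B) x y z x' y' z' / 2"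
proof -
  define p q where "p = B - A" and "q = C - A"
  have x: "x = - y - z" "x' = - y' - z'"
    using assms by linarith+
  have "(x *\<^sub>R A + y *\<^sub>R B + z *\<^sub>R C) \<bullet> (x' *\<^sub>R A + y' *\<^sub>R B + z' *\<^sub>R C) =
      (y *\<^sub>R p + z *\<^sub>R q) \<bullet> (y' *\<^sub>R p + z' *\<^sub>R q)"
    using assms by (simp add: combination_eq_edges p_def q_def)
  then have "(x *\<^sub>R A + y *\<^sub>R B + z *\<^sub>R C) \<bullet> (x' *\<^sub>R A + y' *\<^sub>R B + z' *\<^sub>R C) =
      y * y' * (p \<bullet> p) + (y * z' + z * y') * (p \<bullet> q) + z * z' * (q \<bullet> q)"
    by (simp add: inner_add_left inner_add_right inner_commute algebra_simps)
  moreover have "(dist A B)\<^sup>2 = p \<bullet> p" "(dist C A)\<^sup>2 = q \<bullet> q"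
    "(dist B C)\<^sup>2 = p \<bullet> p + q \<bullet> q - 2 * (p \<bullet> q)"
    by (simp_all add: p_def q_def dist_norm power2_norm_eq_inner inner_diff_left inner_diff_right
        inner_commute)
  ultimately show ?thesis
    unfolding bary_form_def x by (simp add: field_simps) algebra
qed

lemma bary_diff:
  fixes A B C :: point and u v w u' v' w' :: real
  defines "s \<equiv> u + v + w" and "s' \<equiv> u' + v' + w'"
  assumes "s \<noteq> 0" and "s' \<noteq> 0"
  shows "bary A B C u v w - bary A B C u' v' w' = (1 / (s * s')) *\<^sub>R
    ((s' * u - s * u') *\<^sub>R A + (s' * v - s * v') *\<^sub>R B + (s' * w - s * w') *\<^sub>R C)"
proof -
  have "(s' * u - s * u') *\<^sub>R A + (s' * v - s * v') *\<^sub>R B + (s' * w - s * w') *\<^sub>R C =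
      s' *\<^sub>R (u *\<^sub>R A + v *\<^sub>R B + w *\<^sub>R C) - s *\<^sub>R (u' *\<^sub>R A + v' *\<^sub>R B + w' *\<^sub>R C)"
    by (simp add: vec_eq_iff algebra_simps)
  then show ?thesis
    using assms(3,4) unfolding bary_def s_def[symmetric] s'_def[symmetric]
    by (simp add: scaleR_diff_right)
qed

lemma inner_bary_diff:
  fixes A B C :: point and u1 v1 w1 u2 v2 w2 u3 v3 w3 u4 v4 w4 :: real
  defines "s1 \<equiv> u1 + v1 + w1" and "s2 \<equiv> u2 + v2 + w2"
    and "s3 \<equiv> u3 + v3 + w3" and "s4 \<equiv> u4 + v4 + w4"
  assumes "s1 \<noteq> 0" "s2 \<noteq> 0" "s3 \<noteq> 0" "s4 \<noteq> 0"
  shows "(bary A B C u1 v1 w1 - bary A B C u2 v2 w2) \<bullet>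
      (bary A B C u3 v3 w3 - bary A B C u4 v4 w4) =
    - bary_form (dist B C) (dist C A) (dist A B)
        (s2 * u1 - s1 * u2) (s2 * v1 - s1 * v2) (s2 * w1 - s1 * w2)
        (s4 * u3 - s3 * u4) (s4 * v3 - s3 * v4) (s4 * w3 - s3 * w4) / (2 * (s1 * s2) * (s3 * s4))"
proof -
  have "(s2 * u1 - s1 * u2) + (s2 * v1 - s1 * v2) + (s2 * w1 - s1 * w2) = 0"
    "(s4 * u3 - s3 * u4) + (s4 * v3 - s3 * v4) + (s4 * w3 - s3 * w4) = 0"
    unfolding assms(1-4) by algebra+
  then show ?thesis
    using assms(5-8) unfolding assms(1-4)
    by (simp add: bary_diff inner_combination)
qed

lemma inner_bary_diff_eq_0_iff:
  fixes A B C :: point and u1 v1 w1 u2 v2 w2 u3 v3 w3 u4 v4 w4 :: real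
  defines "s1 \<equiv> u1 + v1 + w1" and "s2 \<equiv> u2 + v2 + w2"
    and "s3 \<equiv> u3 + v3 + w3" and "s4 \<equiv> u4 + v4 + w4"
  assumes "s1 \<noteq> 0" "s2 \<noteq> 0" "s3 \<noteq> 0" "s4 \<noteq> 0"
  shows "(bary A B C u1 v1 w1 - bary A B C u2 v2 w2) \<bullet>
      (bary A B C u3 v3 w3 - bary A B C u4 v4 w4) = 0
    \<longleftrightarrow> bary_form (dist B C) (dist C A) (dist A B)
        (s2 * u1 - s1 * u2) (s2 * v1 - s1 * v2) (s2 * w1 - s1 * w2)
        (s4 * u3 - s3 * u4) (s4 * v3 - s3 * v4) (s4 * w3 - s3 * w4) = 0"
  using assms by (simp add: inner_bary_diff)

lemma collinear_combination_iff:
  fixes p q :: point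
  assumes "\<not> collinear {0, p, q}"
  shows "collinear {0, x *\<^sub>R p + y *\<^sub>R q, x' *\<^sub>R p + y' *\<^sub>R q} \<longleftrightarrow> x * y' = y * x'"
proof -
  have indep: "s = 0 \<and> t = 0" if "s *\<^sub>R p + t *\<^sub>R q = 0" for s t
  proof (rule ccontr)
    assume "\<not> (s = 0 \<and> t = 0)"
    then consider "s \<noteq> 0" | "s = 0" "t \<noteq> 0"
      by blast
    then have "collinear {0, q, p}"
    proof cases
      case 1
      have "p = (1 / s) *\<^sub>R (s *\<^sub>R p + t *\<^sub>R q) - (t / s) *\<^sub>R q"
        using 1 by (simp add: scaleR_add_right)
      then have "p = (- t / s) *\<^sub>R q"
        using that by simp
      then show ?thesis
        unfolding collinear_lemma by blast
    next
      case 2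
      then show ?thesis
        using that by simp
    qed
    then show False
      using assms by (simp add: insert_commute)
  qed
  show ?thesis
  proof
    assume "collinear {0, x *\<^sub>R p + y *\<^sub>R q, x' *\<^sub>R p + y' *\<^sub>R q}"
    then consider "x *\<^sub>R p + y *\<^sub>R q = 0" | "x' *\<^sub>R p + y' *\<^sub>R q = 0"
      | k where "(x' - k * x) *\<^sub>R p + (y' - k * y) *\<^sub>R q = 0"
      by (auto simp: collinear_lemma algebra_simps)
    then show "x * y' = y * x'"
      by cases (use indep in \<open>fastforce+\<close>)
  next
    assume det: "x * y' = y * x'"
    consider "x = 0" "y = 0" | "x \<noteq> 0" | "y \<noteq> 0"
      by blast
    then show "collinear {0, x *\<^sub>R p + y *\<^sub>R q, x' *\<^sub>R p + y' *\<^sub>R q}"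
    proof cases
      case 2
      then have "x' *\<^sub>R p + y' *\<^sub>R q = (x' / x) *\<^sub>R (x *\<^sub>R p + y *\<^sub>R q)"
        using det by (simp add: scaleR_add_right field_simps)
      then show ?thesis
        by (auto simp: collinear_lemma)
    next
      case 3
      then have "x' *\<^sub>R p + y' *\<^sub>R q = (y' / y) *\<^sub>R (x *\<^sub>R p + y *\<^sub>R q)"
        using det by (simp add: scaleR_add_right field_simps)
      then show ?thesis
        by (auto simp: collinear_lemma)
    qed simp
  qed
qed

lemma collinear_bary_iff:
  fixes A B C :: point and u1 v1 w1 u2 v2 w2 u3 v3 w3 :: real
  defines "s1 \<equiv> u1 + v1 + w1" and "s2 \<equiv> u2 + v2 + w2" and "s3 \<equiv> u3 + v3 + w3"
  assumes "\<not> collinear {A, B, C}" and "s1 \<noteq> 0" "s2 \<noteq> 0" "s3 \<noteq> 0"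
  shows "collinear {bary A B C u1 v1 w1, bary A B C u2 v2 w2, bary A B C u3 v3 w3} \<longleftrightarrow>
    u1 * (v2 * w3 - w2 * v3) + v1 * (w2 * u3 - u2 * w3) + w1 * (u2 * v3 - v2 * u3) = 0"
proof -
  have edges: "\<not> collinear {0, B - A, C - A}"
    using assms(4) collinear_3[of B A C] by (simp add: insert_commute)
  have diff: "bary A B C u v w - bary A B C u1 v1 w1 = (1 / (s * s1)) *\<^sub>R
      ((s1 * v - s * v1) *\<^sub>R (B - A) + (s1 * w - s * w1) *\<^sub>R (C - A))"
    if "s = u + v + w" "s \<noteq> 0" for s u v w
  proof -
    have "(s1 * u - s * u1) + (s1 * v - s * v1) + (s1 * w - s * w1) = 0"
      unfolding that(1) s1_def by algebra
    then show ?thesis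
      using that assms(5) unfolding s1_def by (simp add: bary_diff combination_eq_edges)
  qed
  let ?P1 = "bary A B C u1 v1 w1" and ?P2 = "bary A B C u2 v2 w2" and ?P3 = "bary A B C u3 v3 w3"
  have "collinear {?P1, ?P2, ?P3} \<longleftrightarrow> collinear {0, ?P2 - ?P1, ?P3 - ?P1}"
    using collinear_3[where x = ?P2 and y = ?P1 and z = ?P3] by (simp add: insert_commute)
  also have "\<dots> \<longleftrightarrow>
      (s1 * v2 - s2 * v1) * (s1 * w3 - s3 * w1) = (s1 * w2 - s2 * w1) * (s1 * v3 - s3 * v1)"
    using assms(5-7) diff[OF s2_def[THEN meta_eq_to_obj_eq]]
      diff[OF s3_def[THEN meta_eq_to_obj_eq]]
    by (simp add: collinear_scaleR_iff collinear_combination_iff[OF edges])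
  also have "\<dots> \<longleftrightarrow>
      s1 * (u1 * (v2 * w3 - w2 * v3) + v1 * (w2 * u3 - u2 * w3) + w1 * (u2 * v3 - v2 * u3)) = 0"
    unfolding s1_def s2_def s3_def by algebra
  finally show ?thesis
    using assms(5) by simp
qed

lemma dist_bary_eq_iff:
  fixes A B C :: point and x1 x2 x3 p1 p2 p3 q1 q2 q3 :: real
  defines "s \<equiv> x1 + x2 + x3" and "\<sigma> \<equiv> p1 + p2 + p3" and "\<tau> \<equiv> q1 + q2 + q3"
  assumes "s \<noteq> 0" "\<sigma> \<noteq> 0" "\<tau> \<noteq> 0"
  shows "dist (bary A B C x1 x2 x3) (bary A B C p1 p2 p3) =
      dist (bary A B C x1 x2 x3) (bary A B C q1 q2 q3)
    \<longleftrightarrow> bary_form (dist B C) (dist C A) (dist A B)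
        (2 * \<sigma> * \<tau> * x1 - s * (\<tau> * p1 + \<sigma> * q1))
        (2 * \<sigma> * \<tau> * x2 - s * (\<tau> * p2 + \<sigma> * q2))
        (2 * \<sigma> * \<tau> * x3 - s * (\<tau> * p3 + \<sigma> * q3))
        (\<sigma> * q1 - \<tau> * p1) (\<sigma> * q2 - \<tau> * p2) (\<sigma> * q3 - \<tau> * p3) = 0"
proof -
  have "(\<tau> * p1 + \<sigma> * q1) + (\<tau> * p2 + \<sigma> * q2) + (\<tau> * p3 + \<sigma> * q3) = 2 * \<sigma> * \<tau>"
    unfolding \<sigma>_def \<tau>_def by algebra
  then show ?thesis
    using assms(4-6) unfolding dist_eq_iff_inner_midpoint assms(1-3)
    by (simp add: midpoint_bary inner_bary_diff_eq_0_iff)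
qed

section \<open>Triangle centres of the configuration\<close>

lemma triangle_inequalities_strict:
  fixes A B C :: point
  assumes "\<not> collinear {A, B, C}" and "a = dist B C" "b = dist C A" "c = dist A B"
  shows "0 < b + c - a" "0 < c + a - b" "0 < a + b - c"
proof -
  have "\<not> collinear {B, C, A}" "\<not> collinear {C, A, B}"
    using assms(1) by (simp_all add: insert_commute)
  then show "0 < b + c - a" "0 < c + a - b" "0 < a + b - c"
    using assms dist_lt_add_if_not_collinear[of A B C] dist_lt_add_if_not_collinear[of B C A]
      dist_lt_add_if_not_collinear[of C A B]
    by linarith+
qed

lemma incenter_bary: "incenter A B C = bary A B C (dist B C) (dist C A) (dist A B)"
  by (simp add: incenter_def bary_def Let_def)

lemma excenter_bary: "excenter A B C = bary A B C (- dist B C) (dist C A) (dist A B)"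
  by (simp add: excenter_def bary_def Let_def)

definition bevan_cubic :: "real \<Rightarrow> real \<Rightarrow> real \<Rightarrow> real" where
  "bevan_cubic a b c = a ^ 3 + a\<^sup>2 * (b + c) - a * (b + c)\<^sup>2 - (b + c) * (b - c)\<^sup>2"

lemma bevan_weights_sum:
  "a * bevan_cubic a b c + b * bevan_cubic b c a + c * bevan_cubic c a b =
    - ((a + b + c) * (b + c - a) * (c + a - b) * (a + b - c))"
  unfolding bevan_cubic_def by algebra

lemma bevan_weights_sum_neq_0:
  assumes "0 < b + c - a" "0 < c + a - b" "0 < a + b - c"
  shows "a * bevan_cubic a b c + b * bevan_cubic b c a + c * bevan_cubic c a b \<noteq> 0"
  using assms by (simp add: bevan_weights_sum)

lemma dist_bevan_excenters:
  assumes "\<not> collinear {A, B, C}" and "a = dist B C" "b = dist C A" "c = dist A B"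
  shows "dist (bary A B C (a * bevan_cubic a b c) (b * bevan_cubic b c a) (c * bevan_cubic c a b))
      (excenter A B C) =
    dist (bary A B C (a * bevan_cubic a b c) (b * bevan_cubic b c a) (c * bevan_cubic c a b))
      (excenter B C A)"
proof -
  note pos = triangle_inequalities_strict[OF assms]
  have "- a + b + c \<noteq> 0" "a + - b + c \<noteq> 0"
    using pos by linarith+
  note iff = dist_bary_eq_iff[where A = A and B = B and C = C,
      OF bevan_weights_sum_neq_0[OF pos] this]
  show ?thesis
    unfolding excenter_bary bary_rotate[of A B C, symmetric] assms(2-4)[symmetric] iff
    unfolding bary_form_def bevan_cubic_def by algebra
qed

lemma bevan_point_bary:
  fixes A B C :: point
  assumes "\<not> collinear {A, B, C}" and "a = dist B C" "b = dist C A" "c = dist A B"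
  shows "bevan_point A B C =
    bary A B C (a * bevan_cubic a b c) (b * bevan_cubic b c a) (c * bevan_cubic c a b)"
proof -
  note pos = triangle_inequalities_strict[OF assms]
  have "\<not> collinear {B, C, A}"
    using assms(1) by (simp add: insert_commute)
  note rotated = dist_bevan_excenters[OF this assms(3,4,2)]
  have "- a + b + c \<noteq> 0" "a + - b + c \<noteq> 0" "a + b + - c \<noteq> 0"
    using pos by linarith+
  moreover have "0 < a" "0 < b" "0 < c"
    using pos by linarith+
  ultimately have "\<not> collinear {excenter A B C, excenter B C A, excenter C A B}"
    unfolding excenter_bary bary_rotate[of A B C, symmetric] bary_rotate[of C A B]
      assms(2-4)[symmetric]
    by (simp add: collinear_bary_iff[OF assms(1)] algebra_simps)
  then show ?thesis
    unfolding bevan_point_def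
    using dist_bevan_excenters[OF assms] rotated
    by (intro circumcenter_eqI) (simp_all add: bary_rotate[of A B C, symmetric])
qed

lemma extouch_point_bary:
  fixes A B C :: point
  assumes "\<not> collinear {A, B, C}" and "a = dist B C" "b = dist C A" "c = dist A B"
  shows "foot (excenter A B C) B C = bary A B C 0 (c + a - b) (a + b - c)"
proof -
  note pos = triangle_inequalities_strict[OF assms]
  have "B \<noteq> C"
    using assms(1) by auto
  have "foot (bary A B C (- a) b c) (bary A B C 0 1 0) (bary A B C 0 0 1) =
      bary A B C 0 (c + a - b) (a + b - c)"
  proof (rule foot_eqI)
    show "bary A B C 0 1 0 \<noteq> bary A B C 0 0 1"
      using \<open>B \<noteq> C\<close> by (simp add: bary_vertices)
    show "collinear {bary A B C 0 1 0, bary A B C 0 0 1, bary A B C 0 (c + a - b) (a + b - c)}"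
      using pos by (simp add: collinear_bary_iff[OF assms(1)])
    show "(bary A B C (- a) b c - bary A B C 0 (c + a - b) (a + b - c)) \<bullet>
        (bary A B C 0 0 1 - bary A B C 0 1 0) = 0"
    proof -
      have "- a + b + c \<noteq> 0" "0 + (c + a - b) + (a + b - c) \<noteq> 0"
        using pos by linarith+
      then show ?thesis
        by (simp add: inner_bary_diff_eq_0_iff bary_form_def assms(2-4)[symmetric]) algebra
    qed
  qed
  then show ?thesis
    unfolding excenter_bary bary_vertices assms(2-4)[symmetric] .
qed

(* The midpoint of Be and its isogonal conjugate (a f(b,c,a) f(c,a,b) : ...). *)
definition extouch_center_weight :: "real \<Rightarrow> real \<Rightarrow> real \<Rightarrow> real" where
  "extouch_center_weight a b c = a * (bevan_cubic b c a * bevan_cubic c a b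
     - bevan_cubic a b c * (b + c - a) * (c + a - b) * (a + b - c))"

lemma extouch_center_weights_sum:
  "extouch_center_weight a b c + extouch_center_weight b c a + extouch_center_weight c a b =
    2 * (a + b + c) * ((b + c - a) * (c + a - b) * (a + b - c))\<^sup>2"
  unfolding extouch_center_weight_def bevan_cubic_def by algebra

lemma extouch_center_weights_sum_neq_0:
  assumes "0 < b + c - a" "0 < c + a - b" "0 < a + b - c"
  shows "extouch_center_weight a b c + extouch_center_weight b c a + extouch_center_weight c a b
    \<noteq> 0"
  using assms by (simp add: extouch_center_weights_sum)

lemma dist_extouch_center:
  fixes A B C :: point
  assumes "\<not> collinear {A, B, C}" and "a = dist B C" "b = dist C A" "c = dist A B"
  shows "dist (bary A B C (extouch_center_weight a b c) (extouch_center_weight b c a)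
        (extouch_center_weight c a b)) (bary A B C 0 (c + a - b) (a + b - c)) =
    dist (bary A B C (extouch_center_weight a b c) (extouch_center_weight b c a)
        (extouch_center_weight c a b)) (bary A B C (b + c - a) 0 (a + b - c))"
proof -
  note pos = triangle_inequalities_strict[OF assms]
  have "0 + (c + a - b) + (a + b - c) \<noteq> 0" "(b + c - a) + 0 + (a + b - c) \<noteq> 0"
    using pos by linarith+
  note iff = dist_bary_eq_iff[where A = A and B = B and C = C,
      OF extouch_center_weights_sum_neq_0[OF pos] this]
  show ?thesis
    unfolding iff assms(2-4)[symmetric]
    unfolding bary_form_def extouch_center_weight_def bevan_cubic_def by algebra
qed

lemma extouch_circumcenter_bary:
  fixes A B C :: point
  assumes "\<not> collinear {A, B, C}" and "a = dist B C" "b = dist C A" "c = dist A B"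
  shows "circumcenter (foot (excenter A B C) B C) (foot (excenter B C A) C A)
      (foot (excenter C A B) A B) =
    bary A B C (extouch_center_weight a b c) (extouch_center_weight b c a)
      (extouch_center_weight c a b)"
proof -
  note pos = triangle_inequalities_strict[OF assms]
  have rot: "\<not> collinear {B, C, A}" "\<not> collinear {C, A, B}"
    using assms(1) by (simp_all add: insert_commute)
  have feet: "foot (excenter A B C) B C = bary A B C 0 (c + a - b) (a + b - c)"
    "foot (excenter B C A) C A = bary A B C (b + c - a) 0 (a + b - c)"
    "foot (excenter C A B) A B = bary A B C (b + c - a) (c + a - b) 0"
    using extouch_point_bary[OF assms] extouch_point_bary[OF rot(1) assms(3,4,2)]
      extouch_point_bary[OF rot(2) assms(4,2,3)]
    by (simp_all add: bary_rotate[of A B C, symmetric] bary_rotate[of C A B])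
  have "0 + (c + a - b) + (a + b - c) \<noteq> 0" "(b + c - a) + 0 + (a + b - c) \<noteq> 0"
    "(b + c - a) + (c + a - b) + 0 \<noteq> 0"
    using pos by linarith+
  then have "\<not> collinear {foot (excenter A B C) B C, foot (excenter B C A) C A,
      foot (excenter C A B) A B}"
    using mult_pos_pos[OF mult_pos_pos[OF pos(1,2)] pos(3)] unfolding feet
    by (simp add: collinear_bary_iff[OF assms(1)] algebra_simps)
  then show ?thesis
    using dist_extouch_center[OF assms] dist_extouch_center[OF rot(1) assms(3,4,2)]
    unfolding feet by (intro circumcenter_eqI) (simp_all add: bary_rotate[of A B C, symmetric])
qed

lemma bisector_feet_weights_sums_neq_0:
  fixes a b c :: real
  assumes "0 < b + c - a" "0 < c + a - b" "0 < a + b - c"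
  shows "((b + c) * (b + c - a) - a\<^sup>2) + a * b + a * c \<noteq> 0"
    "b * a + ((c + a) * (c + a - b) - b\<^sup>2) + b * c \<noteq> 0"
    "c * a + c * b + ((a + b) * (a + b - c) - c\<^sup>2) \<noteq> 0"
proof -
  have "((b + c) * (b + c - a) - a\<^sup>2) + a * b + a * c = (a + b + c) * (b + c - a)"
    "b * a + ((c + a) * (c + a - b) - b\<^sup>2) + b * c = (a + b + c) * (c + a - b)"
    "c * a + c * b + ((a + b) * (a + b - c) - c\<^sup>2) = (a + b + c) * (a + b - c)"
    by algebra+
  moreover have "0 < a + b + c"
    using assms by linarith
  ultimately show "((b + c) * (b + c - a) - a\<^sup>2) + a * b + a * c \<noteq> 0"
    "b * a + ((c + a) * (c + a - b) - b\<^sup>2) + b * c \<noteq> 0"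
    "c * a + c * b + ((a + b) * (a + b - c) - c\<^sup>2) \<noteq> 0"
    using assms by simp_all
qed

lemma foot_bevan_bisector_bary:
  fixes A B C :: point
  assumes "\<not> collinear {A, B, C}" and "a = dist B C" "b = dist C A" "c = dist A B"
  shows "foot (bevan_point A B C) A (incenter A B C) =
    bary A B C ((b + c) * (b + c - a) - a\<^sup>2) (a * b) (a * c)"
proof -
  note pos = triangle_inequalities_strict[OF assms]
  note bevan = bevan_weights_sum_neq_0[OF pos]
  note foot = bisector_feet_weights_sums_neq_0(1)[OF pos]
  have vertex: "1 + 0 + 0 \<noteq> (0::real)" "0 + 1 + 0 \<noteq> (0::real)"
    by simp_all
  have incenter: "a + b + c \<noteq> 0"
    using pos by linarith
  have "\<not> collinear {bary A B C 1 0 0, bary A B C a b c, bary A B C 0 1 0}"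
    using pos by (simp add: collinear_bary_iff[OF assms(1) vertex(1) incenter vertex(2)])
  then have "bary A B C 1 0 0 \<noteq> bary A B C a b c"
    by auto
  then have "foot
      (bary A B C (a * bevan_cubic a b c) (b * bevan_cubic b c a) (c * bevan_cubic c a b))
      (bary A B C 1 0 0) (bary A B C a b c) =
    bary A B C ((b + c) * (b + c - a) - a\<^sup>2) (a * b) (a * c)"
  proof (rule foot_eqI)
    show "collinear {bary A B C 1 0 0, bary A B C a b c,
        bary A B C ((b + c) * (b + c - a) - a\<^sup>2) (a * b) (a * c)}"
      by (simp add: collinear_bary_iff[OF assms(1) vertex(1) incenter foot])
    show "(bary A B C (a * bevan_cubic a b c) (b * bevan_cubic b c a) (c * bevan_cubic c a b) -
        bary A B C ((b + c) * (b + c - a) - a\<^sup>2) (a * b) (a * c)) \<bullet>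
        (bary A B C a b c - bary A B C 1 0 0) = 0"
      unfolding inner_bary_diff_eq_0_iff[OF bevan foot incenter vertex(1)] assms(2-4)[symmetric]
      unfolding bary_form_def bevan_cubic_def by algebra
  qed
  then show ?thesis
    unfolding bevan_point_bary[OF assms] incenter_bary assms(2-4)[symmetric] bary_vertices .
qed

lemma bevan_point_rotate:
  fixes A B C :: point
  assumes "\<not> collinear {A, B, C}"
  shows "bevan_point A B C = bevan_point B C A"
proof -
  have "\<not> collinear {B, C, A}"
    using assms by (simp add: insert_commute)
  then show ?thesis
    using bevan_point_bary[OF assms refl refl refl] bevan_point_bary[OF _ refl refl refl]
    by (simp add: bary_rotate[of A B C, symmetric])
qed

lemma incenter_rotate: "incenter A B C = incenter B C A"
  by (simp add: incenter_bary bary_rotate[of A B C, symmetric])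

lemma inner_nagel_bisector_feet:
  fixes A B C :: point
  assumes "\<not> collinear {A, B, C}" and "a = dist B C" "b = dist C A" "c = dist A B"
  shows "(bary A B C (b + c - a) (c + a - b) (a + b - c) -
      bary A B C ((b + c) * (b + c - a) - a\<^sup>2) (a * b) (a * c)) \<bullet>
    (bary A B C (b * a) ((c + a) * (c + a - b) - b\<^sup>2) (b * c) -
      bary A B C (c * a) (c * b) ((a + b) * (a + b - c) - c\<^sup>2)) = 0"
proof -
  note pos = triangle_inequalities_strict[OF assms]
  have "(b + c - a) + (c + a - b) + (a + b - c) \<noteq> 0"
    using pos by linarith
  note sums = this bisector_feet_weights_sums_neq_0[OF pos]
  show ?thesis
    unfolding inner_bary_diff_eq_0_iff[OF sums] assms(2-4)[symmetric] bary_form_def by algebra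
qed

lemma schur_eq_0_imp_equilateral:
  fixes a b c :: real
  assumes "0 < b + c - a" "0 < c + a - b" "0 < a + b - c"
    and "a * (a - b) * (a - c) + b * (b - c) * (b - a) + c * (c - a) * (c - b) = 0"
  shows "a = b \<and> b = c"
proof -
  have "2 * (a * (a - b) * (a - c) + b * (b - c) * (b - a) + c * (c - a) * (c - b)) =
      (b + c - a) * (b - c)\<^sup>2 + (c + a - b) * (c - a)\<^sup>2 + (a + b - c) * (a - b)\<^sup>2"
    by algebra
  moreover have "0 \<le> (b + c - a) * (b - c)\<^sup>2" "0 \<le> (c + a - b) * (c - a)\<^sup>2"
    "0 \<le> (a + b - c) * (a - b)\<^sup>2"
    using assms(1-3) by simp_all
  ultimately have "(b + c - a) * (b - c)\<^sup>2 = 0 \<and> (c + a - b) * (c - a)\<^sup>2 = 0"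
    using assms(4) by (simp add: add_nonneg_eq_0_iff)
  then show ?thesis
    using assms(1,2) by simp
qed

lemma bisector_feet_bary:
  fixes A B C :: point
  assumes "\<not> collinear {A, B, C}" and "a = dist B C" "b = dist C A" "c = dist A B"
  shows "foot (bevan_point A B C) A (incenter A B C) =
      bary A B C ((b + c) * (b + c - a) - a\<^sup>2) (a * b) (a * c)"
    "foot (bevan_point A B C) B (incenter A B C) =
      bary A B C (b * a) ((c + a) * (c + a - b) - b\<^sup>2) (b * c)"
    "foot (bevan_point A B C) C (incenter A B C) =
      bary A B C (c * a) (c * b) ((a + b) * (a + b - c) - c\<^sup>2)"
proof -
  have rot: "\<not> collinear {B, C, A}" "\<not> collinear {C, A, B}"
    using assms(1) by (simp_all add: insert_commute)
  show "foot (bevan_point A B C) A (incenter A B C) =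
      bary A B C ((b + c) * (b + c - a) - a\<^sup>2) (a * b) (a * c)"
    by (rule foot_bevan_bisector_bary[OF assms])
  show "foot (bevan_point A B C) B (incenter A B C) =
      bary A B C (b * a) ((c + a) * (c + a - b) - b\<^sup>2) (b * c)"
    using foot_bevan_bisector_bary[OF rot(1) assms(3,4,2)]
    by (simp add: bevan_point_rotate[OF assms(1), symmetric] incenter_rotate[of A B C, symmetric]
        bary_rotate[of A B C, symmetric])
  show "foot (bevan_point A B C) C (incenter A B C) =
      bary A B C (c * a) (c * b) ((a + b) * (a + b - c) - c\<^sup>2)"
    using foot_bevan_bisector_bary[OF rot(2) assms(4,2,3)]
    by (simp add: bevan_point_rotate[OF rot(2)] incenter_rotate[of C A B] bary_rotate[of C A B])
qed

lemma orthocenter_bisector_feet: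
  fixes A B C :: point
  assumes "\<not> collinear {A, B, C}" and "a = dist B C" "b = dist C A" "c = dist A B"
    and "\<not> (a = b \<and> b = c)"
  shows "orthocenter (foot (bevan_point A B C) A (incenter A B C))
      (foot (bevan_point A B C) B (incenter A B C)) (foot (bevan_point A B C) C (incenter A B C)) =
    bary A B C (b + c - a) (c + a - b) (a + b - c)"
proof -
  note pos = triangle_inequalities_strict[OF assms(1-4)]
  note feet = bisector_feet_bary[OF assms(1-4)]
  note sums = bisector_feet_weights_sums_neq_0[OF pos]
  have rot: "\<not> collinear {B, C, A}" "\<not> collinear {C, A, B}"
    using assms(1) by (simp_all add: insert_commute)
  have "a * (a - b) * (a - c) + b * (b - c) * (b - a) + c * (c - a) * (c - b) \<noteq> 0"
    using schur_eq_0_imp_equilateral[OF pos] assms(5) by blast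
  moreover have "0 < a + b + c"
    using pos by linarith
  moreover have "(a + b + c) ^ 3 * (a * (a - b) * (a - c) + b * (b - c) * (b - a) +
      c * (c - a) * (c - b)) = 0"
    if "collinear {foot (bevan_point A B C) A (incenter A B C),
      foot (bevan_point A B C) B (incenter A B C), foot (bevan_point A B C) C (incenter A B C)}"
    using that unfolding feet collinear_bary_iff[OF assms(1) sums] by algebra
  ultimately have "\<not> collinear {foot (bevan_point A B C) A (incenter A B C),
      foot (bevan_point A B C) B (incenter A B C), foot (bevan_point A B C) C (incenter A B C)}"
    by fastforce
  then show ?thesis
    using inner_nagel_bisector_feet[OF assms(1-4)] inner_nagel_bisector_feet[OF rot(1) assms(3,4,2)]
      inner_nagel_bisector_feet[OF rot(2) assms(4,2,3)]
    unfolding feet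
    by (intro orthocenter_eqI)
      (simp_all add: bary_rotate[of A B C, symmetric] bary_rotate[of C A B] inner_diff_right)
qed

lemma collinear_bevan_nagel_extouch_center:
  fixes A B C :: point
  assumes "\<not> collinear {A, B, C}" and "a = dist B C" "b = dist C A" "c = dist A B"
  shows "collinear
    {bary A B C (a * bevan_cubic a b c) (b * bevan_cubic b c a) (c * bevan_cubic c a b),
     bary A B C (b + c - a) (c + a - b) (a + b - c),
     bary A B C (extouch_center_weight a b c) (extouch_center_weight b c a)
       (extouch_center_weight c a b)}"
proof -
  note pos = triangle_inequalities_strict[OF assms]
  have nagel: "(b + c - a) + (c + a - b) + (a + b - c) \<noteq> 0"
    using pos by linarith
  show ?thesis
    unfolding collinear_bary_iff[OF assms(1) bevan_weights_sum_neq_0[OF pos] nagel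
        extouch_center_weights_sum_neq_0[OF pos]]
    unfolding extouch_center_weight_def bevan_cubic_def by algebra
qed

theorem proposition4p2:
  fixes A B C I Be A0 B0 C0 O0 A' B' C' H' :: point
  assumes "\<not> collinear {A, B, C}"
      and "I = incenter A B C"
      and "Be = bevan_point A B C"
      and "A0 = foot (excenter A B C) B C"
      and "B0 = foot (excenter B C A) C A"
      and "C0 = foot (excenter C A B) A B"
      and "O0 = circumcenter A0 B0 C0"
      and "A' = foot Be A I"
      and "B' = foot Be B I"
      and "C' = foot Be C I"
      and "H' = orthocenter A' B' C'"
  shows "collinear {Be, H', O0}"
proof -
  define a b c where "a = dist B C" and "b = dist C A" and "c = dist A B"
  note triangle = assms(1) a_def b_def c_def
  have Be: "Be = bary A B C (a * bevan_cubic a b c) (b * bevan_cubic b c a) (c * bevan_cubic c a b)"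
    using bevan_point_bary[OF triangle] assms(3) by simp
  have O0: "O0 = bary A B C (extouch_center_weight a b c) (extouch_center_weight b c a)
      (extouch_center_weight c a b)"
    using extouch_circumcenter_bary[OF triangle] assms(4-7) by simp
  show ?thesis
  proof (cases "a = b \<and> b = c")
    case True
    have "0 < a"
      using triangle_inequalities_strict[OF triangle] by linarith
    then have "a * bevan_cubic a a a \<noteq> 0" "extouch_center_weight a a a \<noteq> 0"
      using bevan_weights_sum[of a a a] extouch_center_weights_sum[of a a a] by auto
    then have "Be = O0"
      using True unfolding Be O0 by (simp add: bary_centroid)
    then show ?thesis
      by (simp add: insert_commute)
  next
    case False
    then have "H' = bary A B C (b + c - a) (c + a - b) (a + b - c)"
      using orthocenter_bisector_feet[OF triangle] assms(2,3,8-11) by simp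
    then show ?thesis
      using collinear_bevan_nagel_extouch_center[OF triangle] unfolding Be O0 by simp
  qed
qed

end
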